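(* Let $\lambda\in(\frac16,\frac56)$, let $(\beta_0,\beta_1,\beta_2,\beta_3)$ be a probability vector, and let $x\in[0,1]$ satisfy $\lim_{n\to\infty}\beta_i(x,n)/n=\beta_i$ for $i=0,1,2,3$. (i) If $\beta_1\log(6\lambda+1)+\beta_2\log(6\lambda-1)>0$, then $x\in\mathcal I$. (ii) If $\beta_1\log(6\lambda+1)+\beta_2\log(6\lambda-1)\le0$, then $h_{F^\lambda}(x)=1$.
   Context: Construction: $F^\lambda_0\equiv0$ on $[0,1]$. Given $F^\lambda_n$ with its $4^n$ closed intervals of generation $n$ (covering $[0,1]$, disjoint interiors, $F^\lambda_n$ affine on each), on each interval $[a,b]$ of generation $n$, with $\ell=b-a$ and slope $m$, $F^\lambda_{n+1}$ coincides with $F^\lambda_n$ at $a,a+\ell/3,a+2\ell/3,b$, equals $F^\lambda_n(a+\ell/2)+\lambda\ell\sqrt{1+m^2}$ at $a+\ell/2$, and is affine on $[a,a+\ell/3],[a+\ell/3,a+\ell/2],[a+\ell/2,a+2\ell/3],[a+2\ell/3,b]$. $F^\lambda=\lim_nF^\lambda_n$. Pointwise exponent: $f\in\mathcal C^\alpha(x_0)$ if there exist a polynomial $P$ of degree at most $\lfloor\alpha\rfloor$ and $C,\delta>0$ with $|f(x)-P(x-x_0)|\le C|x-x_0|^\alpha$ whenever $|x-x_0|<\delta$; $h_f(x_0)=\sup\{\alpha\ge0:f\in\mathcal C^\alpha(x_0)\}$. Dynamics: $T(x)=3x$ on $[0,\frac13)$, $6x-2$ on $[\frac13,\frac12)$,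 $4-6x$ on $[\frac12,\frac23)$, $3x-2$ on $[\frac23,1]$; $U(x)=0,1,2,3$ on these intervals; $u_n(x)=U(T^nx)$; $\beta_i(x,n)=\#\{k<n:u_k(x)=i\}$. $\mathcal E$ is the set of $x$ whose digit sequence is eventually constantly $0$ or eventually constantly $3$; for $x\notin\mathcal E$, $m_n(x)$ is the slope of $F^\lambda_n$ at $x$; $\mathcal I$ is the set of $x\in[0,1]\setminus\mathcal E$ with $|m_n(x)|\to+\infty$. *)

theory Defs
  imports "HOL-Analysis.Analysis" "HOL-Computational_Algebra.Polynomial"
begin

definition split4 :: "real \<times> real \<Rightarrow> (real \<times> real) list" where
  "split4 I = (let a = fst I; b = snd I; l = b - a in
     [(a, a + l/3), (a + l/3, a + l/2), (a + l/2, a + 2*l/3), (a + 2*l/3, b)])"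

fun gen :: "nat \<Rightarrow> (real \<times> real) list" where
  "gen 0 = [(0, 1)]"
| "gen (Suc n) = concat (map split4 (gen n))"

definition hat :: "real \<Rightarrow> real \<Rightarrow> real \<Rightarrow> real" where
  "hat a b x = (let l = b - a in
     if a + l/3 \<le> x \<and> x \<le> a + l/2 then (x - (a + l/3)) / (l/6)
     else if a + l/2 < x \<and> x \<le> a + 2*l/3 then ((a + 2*l/3) - x) / (l/6)
     else 0)"

fun Fn :: "real \<Rightarrow> nat \<Rightarrow> real \<Rightarrow> real" where
  "Fn lam 0 x = 0"
| "Fn lam (Suc n) x = Fn lam n x +
     sum_list (map (\<lambda>(a, b). lam * (b - a) *
        sqrt (1 + ((Fn lam n b - Fn lam n a) / (b - a))\<^sup>2) * hat a b x) (gen n))"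

definition Flim :: "real \<Rightarrow> real \<Rightarrow> real" where
  "Flim lam x = lim (\<lambda>n. Fn lam n x)"

definition pw_hoelder :: "real set \<Rightarrow> (real \<Rightarrow> real) \<Rightarrow> real \<Rightarrow> real \<Rightarrow> bool" where
  "pw_hoelder S f x0 \<alpha> \<longleftrightarrow>
     (\<exists>P :: real poly. degree P \<le> nat \<lfloor>\<alpha>\<rfloor> \<and>
        (\<exists>C \<delta>. \<delta> > 0 \<and> (\<forall>x\<in>S. \<bar>x - x0\<bar> < \<delta> \<longrightarrow>
            \<bar>f x - poly P (x - x0)\<bar> \<le> C * \<bar>x - x0\<bar> powr \<alpha>)))"

definition hoelder_exp :: "real set \<Rightarrow> (real \<Rightarrow> real) \<Rightarrow> real \<Rightarrow> ereal" where
  "hoelder_exp S f x0 = Sup (ereal ` {\<alpha>. \<alpha> \<ge> 0 \<and> pw_hoelder S f x0 \<alpha>})"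

definition T :: "real \<Rightarrow> real" where
  "T x = (if x < 1/3 then 3*x else if x < 1/2 then 6*x - 2
          else if x < 2/3 then 4 - 6*x else 3*x - 2)"

definition U :: "real \<Rightarrow> nat" where
  "U x = (if x < 1/3 then 0 else if x < 1/2 then 1 else if x < 2/3 then 2 else 3)"

definition udig :: "nat \<Rightarrow> real \<Rightarrow> nat" where
  "udig n x = U ((T ^^ n) x)"

definition betacount :: "nat \<Rightarrow> real \<Rightarrow> nat \<Rightarrow> nat" where
  "betacount i x n = card {k. k < n \<and> udig k x = i}"

definition Eset :: "real set" where
  "Eset = {x. (\<exists>N. \<forall>n\<ge>N. udig n x = 0) \<or> (\<exists>N. \<forall>n\<ge>N. udig n x = 3)}"

text \<open>Slope of F^lambda_n at x (for x not in E, x is interior to a generation-n interval).\<close>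
definition slope :: "real \<Rightarrow> nat \<Rightarrow> real \<Rightarrow> real" where
  "slope lam n x = deriv (Fn lam n) x"

definition Iset :: "real \<Rightarrow> real set" where
  "Iset lam = {x. x \<in> {0..1} - Eset \<and> filterlim (\<lambda>n. \<bar>slope lam n x\<bar>) at_top sequentially}"

end

theory Submission
  imports Defs
begin

text \<open>
  Measured in the direction in which \<open>T\<^sup>n\<close> traverses the generation-\<open>n\<close> cell of \<open>x\<close>,
  the slope \<open>s\<close> of \<open>F\<^sub>n\<close> on that cell becomes \<open>s + 6\<lambda> sqrt(1+s\<^sup>2)\<close> or
  \<open>6\<lambda> sqrt(1+s\<^sup>2) - s\<close> after a digit 1 or 2 and stays put after a digit 0 or 3.
  So, up to additive constants, \<open>sqrt(1+s\<^sup>2)\<close> is multiplied by \<open>6\<lambda>+1\<close> resp.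
  \<open>6\<lambda>-1\<close> at these digits and grows like \<open>exp(n(\<beta>\<^sub>1 ln(6\<lambda>+1) + \<beta>\<^sub>2 ln(6\<lambda>-1)))\<close>.
  If the exponent is positive, the slopes blow up. Otherwise they grow subexponentially,
  while the cells shrink at least like \<open>3\<^sup>-\<^sup>n\<close>. Graph lengths over nested cells contract
  by \<open>\<rho> = (1+6\<lambda>)/6 < 1\<close> and every later correction is at most \<open>\<lambda>\<close> times such a length,
  so \<open>|F y - F x|\<close> is at most a constant times the stretch \<open>sqrt(1+s\<^sup>2)\<close> at the level where
  \<open>y\<close> leaves the cells of \<open>x\<close>, times \<open>|y - x|\<close>; this gives every exponent below 1.
  Conversely, the bump \<open>\<lambda> l sqrt(1+m\<^sup>2)\<close> in the middle of each cell of length \<open>l\<close> is a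
  second difference of order \<open>l\<close>, which rules out exponents above 1.
\<close>

section \<open>Generation intervals\<close>

fun chain_from :: "real \<Rightarrow> (real \<times> real) list \<Rightarrow> real \<Rightarrow> bool" where
  "chain_from s [] e \<longleftrightarrow> s = e"
| "chain_from s (J # Js) e \<longleftrightarrow> s = fst J \<and> fst J < snd J \<and> chain_from (snd J) Js e"

lemma chain_from_append:
  "chain_from s (Js @ Ks) e \<longleftrightarrow> (\<exists>m. chain_from s Js m \<and> chain_from m Ks e)"
  by (induction Js arbitrary: s) auto

lemma chain_from_le: "chain_from s Js e \<Longrightarrow> s \<le> e"
  by (induction Js arbitrary: s) force+

lemma chain_from_mem:
  "chain_from s Js e \<Longrightarrow> J \<in> set Js \<Longrightarrow> s \<le> fst J \<and> fst J < snd J \<and> snd J \<le> e"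
proof (induction Js arbitrary: s)
  case (Cons K Js)
  then have "s = fst K" "fst K < snd K" "chain_from (snd K) Js e" by auto
  with Cons chain_from_le[of "snd K" Js e] show ?case by fastforce
qed simp

(* \<open>b - (b-a)/3\<close> rather than \<open>a + 2*(b-a)/3\<close>: the simplifier leaves this form intact,
   so the lemmas about the four children keep matching. *)
lemma split4_eq:
  "split4 (a, b) = [(a, a + (b-a)/3), (a + (b-a)/3, a + (b-a)/2),
      (a + (b-a)/2, b - (b-a)/3), (b - (b-a)/3, b)]"
  by (simp add: split4_def Let_def field_simps)

lemma chain_from_concat_split4:
  "chain_from s Js e \<Longrightarrow> chain_from s (concat (map split4 Js)) e"
proof (induction Js arbitrary: s)
  case (Cons J Js)
  obtain a b where "J = (a, b)" by force
  with Cons show ?case by (auto simp: chain_from_append split4_eq field_simps)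
qed simp

lemma chain_from_gen: "chain_from 0 (gen n) 1"
  by (induction n) (auto intro: chain_from_concat_split4)

lemma gen_interval: "J \<in> set (gen n) \<Longrightarrow> 0 \<le> fst J \<and> fst J < snd J \<and> snd J \<le> 1"
  using chain_from_mem[OF chain_from_gen] by blast

lemma mem_gen_Suc: "J \<in> set (gen (Suc n)) \<longleftrightarrow> (\<exists>P\<in>set (gen n). J \<in> set (split4 P))"
  by auto

lemma split4_interval:
  "J \<in> set (split4 (a, b)) \<Longrightarrow> a < b \<Longrightarrow> a \<le> fst J \<and> snd J \<le> b \<and> fst J < snd J"
  by (auto simp: split4_eq field_simps)

lemma split4_covers:
  assumes "a < b" "a \<le> y" "y \<le> b"
  shows "\<exists>c\<in>set (split4 (a, b)). fst c \<le> y \<and> y \<le> snd c"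
proof -
  consider "y \<le> a + (b-a)/3" | "a + (b-a)/3 \<le> y" "y \<le> a + (b-a)/2"
    | "a + (b-a)/2 \<le> y" "y \<le> b - (b-a)/3" | "b - (b-a)/3 \<le> y"
    by linarith
  then show ?thesis
    using assms by cases (force simp: split4_eq)+
qed

lemma split4_length_le:
  "c \<in> set (split4 (a, b)) \<Longrightarrow> a < b \<Longrightarrow> snd c - fst c \<le> (b - a)/3"
  by (auto simp: split4_eq field_simps)

lemma gen_length_le: "J \<in> set (gen n) \<Longrightarrow> snd J - fst J \<le> (1/3)^n"
proof (induction n arbitrary: J)
  case (Suc n)
  then obtain P where P: "P \<in> set (gen n)" "J \<in> set (split4 P)"
    by (auto simp: mem_gen_Suc)
  then have "snd J - fst J \<le> (snd P - fst P)/3"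
    using split4_length_le[of J "fst P" "snd P"] gen_interval[OF P(1)] by simp
  with Suc.IH[OF P(1)] show ?case by simp
qed simp

section \<open>The approximations \<open>F\<^sub>n\<close>\<close>

lemma sum_list_chain_single:
  assumes "chain_from s Js e" "(a, b) \<in> set Js" "a \<le> x" "x \<le> b"
    and "\<And>a' b'. (a', b') \<in> set Js \<Longrightarrow> a' < b' \<Longrightarrow> x \<le> a' \<or> b' \<le> x \<Longrightarrow> f (a', b') = (0::real)"
  shows "sum_list (map f Js) = f (a, b)"
  using assms
proof (induction Js arbitrary: s)
  case (Cons K Js)
  obtain c d where K: "K = (c, d)" by force
  from Cons.prems K have cd: "c < d" "chain_from d Js e" by auto
  have later: "d \<le> fst J \<and> fst J < snd J" if "J \<in> set Js" for J
    using chain_from_mem[OF cd(2) that] by blast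
  show ?case
  proof (cases "(a, b) = K")
    case True
    have "f J = 0" if "J \<in> set Js" for J
      using later[OF that] Cons.prems(4) Cons.prems(5)[of "fst J" "snd J"] that True K by auto
    then have "sum_list (map f Js) = 0" by (induction Js) auto
    then show ?thesis using True by simp
  next
    case False
    then have ab: "(a, b) \<in> set Js" using Cons.prems by auto
    then have "f K = 0" using later[OF ab] Cons.prems(3) Cons.prems(5)[of c d] K cd by auto
    with Cons.IH[OF cd(2) ab Cons.prems(3,4)] Cons.prems(5) show ?thesis by auto
  qed
qed simp

lemma hat_outside: "a < b \<Longrightarrow> x \<le> a \<or> b \<le> x \<Longrightarrow> hat a b x = 0"
  unfolding hat_def Let_def by (auto simp: field_simps)

lemma hat_bounds: "a < b \<Longrightarrow> 0 \<le> hat a b x \<and> hat a b x \<le> 1"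
  unfolding hat_def Let_def by (auto simp: field_simps)

lemma hat_on_pieces:
  assumes "a < b"
  shows "x \<in> {a..a + (b-a)/3} \<Longrightarrow> hat a b x = 0"
    and "x \<in> {a + (b-a)/3..a + (b-a)/2} \<Longrightarrow> hat a b x = 6/(b - a) * (x - (a + (b-a)/3))"
    and "x \<in> {a + (b-a)/2..b - (b-a)/3} \<Longrightarrow> hat a b x = 6/(b - a) * ((b - (b-a)/3) - x)"
    and "x \<in> {b - (b-a)/3..b} \<Longrightarrow> hat a b x = 0"
proof -
  assume x: "x \<in> {a + (b-a)/2..b - (b-a)/3}"
  show "hat a b x = 6/(b - a) * ((b - (b-a)/3) - x)"
  proof (cases "x = a + (b-a)/2")
    case True
    then show ?thesis using assms unfolding hat_def Let_def by (simp add: field_simps)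
  next
    case False
    then show ?thesis using x assms unfolding hat_def Let_def by (auto simp: field_simps)
  qed
qed (use assms in \<open>auto simp: hat_def Let_def field_simps\<close>)

lemma hat_at_nodes:
  assumes "a < b"
  shows "hat a b a = 0" "hat a b (a + (b-a)/3) = 0" "hat a b (a + (b-a)/2) = 1"
    and "hat a b (b - (b-a)/3) = 0" "hat a b b = 0"
  using assms unfolding hat_def Let_def by (simp_all add: field_simps)

lemma hat_affine_on_child:
  assumes "J \<in> set (split4 (a, b))" "a < b"
  shows "\<exists>A B. \<forall>x\<in>{fst J..snd J}. hat a b x = A + B * x"
proof -
  consider "J = (a, a + (b-a)/3)" | "J = (a + (b-a)/3, a + (b-a)/2)"
    | "J = (a + (b-a)/2, b - (b-a)/3)" | "J = (b - (b-a)/3, b)"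
    using assms(1) by (auto simp: split4_eq)
  then show ?thesis
  proof cases
    case 2
    then have "\<forall>x\<in>{fst J..snd J}. hat a b x = - 6/(b-a) * (a + (b-a)/3) + 6/(b-a) * x"
      using hat_on_pieces(2)[OF assms(2)] by (simp add: algebra_simps)
    then show ?thesis by blast
  next
    case 3
    then have "\<forall>x\<in>{fst J..snd J}. hat a b x = 6/(b-a) * (b - (b-a)/3) + - 6/(b-a) * x"
      using hat_on_pieces(3)[OF assms(2)] by (simp add: algebra_simps)
    then show ?thesis by blast
  qed (use hat_on_pieces[OF assms(2)] in \<open>auto intro!: exI[of _ 0]\<close>)
qed

lemma affine_through_endpoints:
  fixes g :: "real \<Rightarrow> real"
  assumes "\<forall>x\<in>{c..d}. g x = A + B * x" "c < d" "x \<in> {c..d}"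
  shows "g x = g c + (g d - g c)/(d - c) * (x - c)"
  using assms by (simp add: field_simps)

definition chord_slope :: "real \<Rightarrow> nat \<Rightarrow> real \<times> real \<Rightarrow> real" where
  "chord_slope lam n J = (Fn lam n (snd J) - Fn lam n (fst J)) / (snd J - fst J)"

definition chord_stretch :: "real \<Rightarrow> nat \<Rightarrow> real \<times> real \<Rightarrow> real" where
  "chord_stretch lam n J = sqrt (1 + (chord_slope lam n J)\<^sup>2)"

definition graph_length :: "real \<Rightarrow> nat \<Rightarrow> real \<times> real \<Rightarrow> real" where
  "graph_length lam n J = (snd J - fst J) * chord_stretch lam n J"

lemma chord_stretch_ge_1: "1 \<le> chord_stretch lam n J"
  unfolding chord_stretch_def by simp

lemma abs_chord_slope_le_stretch: "\<bar>chord_slope lam n J\<bar> \<le> chord_stretch lam n J"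
  unfolding chord_stretch_def by (simp add: real_le_rsqrt)

lemma graph_length_nonneg: "J \<in> set (gen n) \<Longrightarrow> 0 \<le> graph_length lam n J"
  unfolding graph_length_def using gen_interval[of J n] chord_stretch_ge_1[of lam n J] by simp

lemma Fn_Suc_on_gen:
  assumes "J \<in> set (gen n)" "fst J \<le> x" "x \<le> snd J"
  shows "Fn lam (Suc n) x
    = Fn lam n x + lam * (snd J - fst J) * chord_stretch lam n J * hat (fst J) (snd J) x"
proof -
  obtain a b where J: "J = (a, b)" by force
  let ?f = "\<lambda>(a, b). lam * (b - a) * sqrt (1 + ((Fn lam n b - Fn lam n a) / (b - a))\<^sup>2) * hat a b x"
  have "sum_list (map ?f (gen n)) = ?f (a, b)"
    by (rule sum_list_chain_single[OF chain_from_gen]) (use assms J hat_outside in auto)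
  then show ?thesis by (simp add: J chord_stretch_def chord_slope_def)
qed

lemma Fn_affine_on_gen:
  "J \<in> set (gen n) \<Longrightarrow> x \<in> {fst J..snd J}
    \<Longrightarrow> Fn lam n x = Fn lam n (fst J) + chord_slope lam n J * (x - fst J)"
proof (induction n arbitrary: J x)
  case 0
  then show ?case by (simp add: chord_slope_def)
next
  case (Suc n)
  obtain P where P: "P \<in> set (gen n)" "J \<in> set (split4 P)"
    using Suc.prems(1) by (auto simp: mem_gen_Suc)
  obtain a b where ab: "P = (a, b)" by force
  have "a < b" using gen_interval[OF P(1)] ab by simp
  then have sub: "a \<le> fst J" "snd J \<le> b" "fst J < snd J"
    and "\<exists>A B. \<forall>x\<in>{fst J..snd J}. hat a b x = A + B * x"
    using split4_interval[of J a b] hat_affine_on_child[of J a b] P(2) ab by auto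
  then obtain A B where AB: "\<forall>x\<in>{fst J..snd J}. hat a b x = A + B * x" by blast
  define c where "c = lam * (b - a) * chord_stretch lam n P"
  define m where "m = chord_slope lam n P"
  have "\<forall>y\<in>{fst J..snd J}. Fn lam (Suc n) y = (Fn lam n a - m * a + c * A) + (m + c * B) * y"
  proof
    fix y assume y: "y \<in> {fst J..snd J}"
    then have "Fn lam (Suc n) y = Fn lam n y + c * hat a b y"
      using Fn_Suc_on_gen[OF P(1), of y] ab sub unfolding c_def by simp
    also have "Fn lam n y = Fn lam n a + m * (y - a)"
      using Suc.IH[OF P(1), of y] ab sub y unfolding m_def by simp
    finally show "Fn lam (Suc n) y = (Fn lam n a - m * a + c * A) + (m + c * B) * y"
      using AB y by (simp add: algebra_simps)
  qed
  from affine_through_endpoints[OF this sub(3) Suc.prems(2)] show ?case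
    by (simp add: chord_slope_def)
qed

declare Fn.simps(2)[simp del]

lemma Fn_Suc_at:
  assumes "(a, b) \<in> set (gen n)" "a \<le> p" "p \<le> b"
  shows "Fn lam (Suc n) p = Fn lam n a + chord_slope lam n (a, b) * (p - a)
    + lam * (b - a) * chord_stretch lam n (a, b) * hat a b p"
  using Fn_Suc_on_gen[OF assms(1), of p] Fn_affine_on_gen[OF assms(1), of p] assms by simp

lemma Fn_Suc_at_nodes:
  fixes lam :: real
  assumes "(a, b) \<in> set (gen n)"
  defines "m \<equiv> chord_slope lam n (a, b)" and "s \<equiv> chord_stretch lam n (a, b)"
  shows "Fn lam (Suc n) a = Fn lam n a"
    and "Fn lam (Suc n) (a + (b-a)/3) = Fn lam n a + m * ((b-a)/3)"
    and "Fn lam (Suc n) (a + (b-a)/2) = Fn lam n a + m * ((b-a)/2) + lam * (b-a) * s"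
    and "Fn lam (Suc n) (b - (b-a)/3) = Fn lam n a + m * (2*(b-a)/3)"
    and "Fn lam (Suc n) b = Fn lam n a + m * (b-a)"
proof -
  have ab: "a < b" using gen_interval[OF assms(1)] by simp
  have nodes: "a \<le> a + (b-a)/3" "a + (b-a)/3 \<le> b" "a \<le> a + (b-a)/2" "a + (b-a)/2 \<le> b"
    "a \<le> b - (b-a)/3" "b - (b-a)/3 \<le> b"
    using ab by (auto simp: field_simps)
  note at = Fn_Suc_at[OF assms(1), of _ lam, folded m_def s_def]
  show "Fn lam (Suc n) a = Fn lam n a" using at[of a] hat_at_nodes[OF ab] ab by simp
  show "Fn lam (Suc n) (a + (b-a)/3) = Fn lam n a + m * ((b-a)/3)"
    using at[of "a + (b-a)/3"] hat_at_nodes[OF ab] nodes by simp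
  show "Fn lam (Suc n) (a + (b-a)/2) = Fn lam n a + m * ((b-a)/2) + lam * (b-a) * s"
    using at[of "a + (b-a)/2"] hat_at_nodes[OF ab] nodes by simp
  have "b - (b-a)/3 - a = 2*(b-a)/3" by (simp add: field_simps)
  then show "Fn lam (Suc n) (b - (b-a)/3) = Fn lam n a + m * (2*(b-a)/3)"
    using at[of "b - (b-a)/3"] hat_at_nodes[OF ab] nodes by simp
  show "Fn lam (Suc n) b = Fn lam n a + m * (b-a)"
    using at[of b] hat_at_nodes[OF ab] ab by simp
qed

lemma chord_slope_children:
  fixes lam :: real
  assumes "(a, b) \<in> set (gen n)"
  defines "m \<equiv> chord_slope lam n (a, b)" and "s \<equiv> chord_stretch lam n (a, b)"
  shows "chord_slope lam (Suc n) (a, a + (b-a)/3) = m"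
    and "chord_slope lam (Suc n) (a + (b-a)/3, a + (b-a)/2) = m + 6 * lam * s"
    and "chord_slope lam (Suc n) (a + (b-a)/2, b - (b-a)/3) = m - 6 * lam * s"
    and "chord_slope lam (Suc n) (b - (b-a)/3, b) = m"
  using Fn_Suc_at_nodes[OF assms(1), of lam, folded m_def s_def] gen_interval[OF assms(1)]
  by (simp_all add: chord_slope_def field_simps)

lemma Fn_Suc_endpoint:
  assumes "J \<in> set (gen n)" "p = fst J \<or> p = snd J"
  shows "Fn lam (Suc n) p = Fn lam n p"
  using Fn_Suc_on_gen[OF assms(1), of p] hat_at_nodes[of "fst J" "snd J"] gen_interval[OF assms(1)] assms(2)
  by auto

lemma sqrt_one_plus_shifted_le:
  fixes m s c :: real
  assumes "s\<^sup>2 = 1 + m\<^sup>2" "0 \<le> s" "0 \<le> c"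
  shows "sqrt (1 + (m + c * s)\<^sup>2) \<le> (1 + c) * s"
proof (rule real_le_lsqrt)
  have "\<bar>m\<bar> \<le> \<bar>s\<bar>" using assms(1) by (simp add: abs_le_square_iff)
  then have "m \<le> s" using assms(2) by (simp add: abs_le_iff)
  then have "2 * c * (m * s) \<le> 2 * c * (s * s)"
    using assms(2,3) by (intro mult_left_mono mult_right_mono) auto
  then show "1 + (m + c * s)\<^sup>2 \<le> ((1 + c) * s)\<^sup>2"
    using assms(1) by (simp add: power2_eq_square algebra_simps)
qed (use assms in auto)

lemma chord_stretch_child_le:
  assumes "J \<in> set (gen n)" "c \<in> set (split4 J)" "0 \<le> lam"
  shows "chord_stretch lam (Suc n) c \<le> (1 + 6 * lam) * chord_stretch lam n J"
proof -
  obtain a b where J: "J = (a, b)" by force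
  define m where "m = chord_slope lam n (a, b)"
  define s where "s = chord_stretch lam n (a, b)"
  have s: "s\<^sup>2 = 1 + m\<^sup>2" "1 \<le> s"
    unfolding s_def m_def chord_stretch_def by auto
  have "0 \<le> 6 * lam" using assms(3) by simp
  note up = sqrt_one_plus_shifted_le[OF s(1) _ this] and
    down = sqrt_one_plus_shifted_le[of s "-m", OF _ _ this]
  have "c = (a, a + (b-a)/3) \<or> c = (a + (b-a)/3, a + (b-a)/2)
      \<or> c = (a + (b-a)/2, b - (b-a)/3) \<or> c = (b - (b-a)/3, b)"
    using assms(2) by (simp only: J split4_eq set_simps insert_iff empty_iff simp_thms)
  then consider "chord_slope lam (Suc n) c = m" | "chord_slope lam (Suc n) c = m + 6 * lam * s"
    | "chord_slope lam (Suc n) c = m - 6 * lam * s"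
    using chord_slope_children[OF assms(1)[unfolded J], of lam] unfolding m_def s_def by metis
  then have "sqrt (1 + (chord_slope lam (Suc n) c)\<^sup>2) \<le> (1 + 6 * lam) * s"
  proof cases
    case 1
    have "0 \<le> 6 * lam * s" using s(2) assms(3) by simp
    with 1 show ?thesis by (simp add: s_def m_def chord_stretch_def algebra_simps)
  next
    case 3
    then show ?thesis using down s by (simp add: power2_commute)
  qed (use up s(2) in simp)
  then show ?thesis unfolding chord_stretch_def[of lam "Suc n"] J s_def .
qed

locale admissible_lambda =
  fixes lam :: real
  assumes lam_gt: "1/6 < lam" and lam_lt: "lam < 5/6"
begin

definition rho :: real where "rho = (1 + 6 * lam)/6"

lemma rho_bounds: "1/3 < rho" "rho < 1"
  using lam_gt lam_lt unfolding rho_def by auto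

lemma graph_length_child_le:
  assumes "J \<in> set (gen n)" "c \<in> set (split4 J)"
  shows "graph_length lam (Suc n) c \<le> rho * graph_length lam n J"
proof -
  obtain a b where J: "J = (a, b)" by force
  have ab: "a < b" using gen_interval[OF assms(1)] J by simp
  define s where "s = chord_stretch lam n (a, b)"
  have s1: "1 \<le> s" unfolding s_def by (rule chord_stretch_ge_1)
  have outer: "(b - a)/3 * s \<le> rho * ((b - a) * s)"
    using rho_bounds ab s1 by (simp add: mult_right_mono)
  have inner: "(b - a)/6 * chord_stretch lam (Suc n) c \<le> rho * ((b - a) * s)"
    using chord_stretch_child_le[OF assms, of lam] lam_gt ab
    unfolding rho_def s_def J by (simp add: mult_left_mono)
  have "c \<in> {(a, a + (b-a)/3), (b - (b-a)/3, b)}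
      \<or> c \<in> {(a + (b-a)/3, a + (b-a)/2), (a + (b-a)/2, b - (b-a)/3)}"
    using assms(2) unfolding J by (auto simp: split4_eq)
  then show ?thesis
  proof
    assume "c \<in> {(a, a + (b-a)/3), (b - (b-a)/3, b)}"
    then have "graph_length lam (Suc n) c = (b - a)/3 * s"
      using chord_slope_children[OF assms(1)[unfolded J], of lam]
      by (auto simp: graph_length_def chord_stretch_def s_def)
    then show ?thesis using outer unfolding graph_length_def[of lam n] J s_def by simp
  next
    assume "c \<in> {(a + (b-a)/3, a + (b-a)/2), (a + (b-a)/2, b - (b-a)/3)}"
    then have "graph_length lam (Suc n) c = (b - a)/6 * chord_stretch lam (Suc n) c"
      by (auto simp: graph_length_def field_simps)
    then show ?thesis using inner unfolding graph_length_def[of lam n] J s_def by simp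
  qed
qed

end

section \<open>Convergence of \<open>F\<^sub>n\<close>\<close>

lemma gen_covers:
  assumes "y \<in> {0..1}"
  shows "\<exists>J\<in>set (gen n). fst J \<le> y \<and> y \<le> snd J"
proof (induction n)
  case (Suc n)
  then obtain J where J: "J \<in> set (gen n)" "fst J \<le> y" "y \<le> snd J" by blast
  then obtain c where "c \<in> set (split4 (fst J, snd J))" "fst c \<le> y" "y \<le> snd c"
    using split4_covers[of "fst J" "snd J" y] gen_interval[OF J(1)] by auto
  with J(1) show ?case by (auto simp: mem_gen_Suc)
qed (use assms in auto)

lemma endpoint_in_later_gen:
  assumes "J \<in> set (gen n)" "p = fst J \<or> p = snd J"
  shows "\<exists>J'\<in>set (gen (n + k)). p = fst J' \<or> p = snd J'"
proof (induction k)
  case (Suc k)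
  then obtain a b where ab: "(a, b) \<in> set (gen (n + k))" "p = a \<or> p = b" by auto
  then have "(a, a + (b-a)/3) \<in> set (gen (Suc (n + k)))" "(b - (b-a)/3, b) \<in> set (gen (Suc (n + k)))"
    by (auto simp: mem_gen_Suc split4_eq intro!: bexI[OF _ ab(1)])
  with ab(2) show ?case by force
qed (use assms in auto)

lemma Fn_endpoint_stable:
  assumes "J \<in> set (gen n)" "p = fst J \<or> p = snd J"
  shows "Fn lam (n + k) p = Fn lam n p"
proof (induction k)
  case (Suc k)
  obtain J' where "J' \<in> set (gen (n + k))" "p = fst J' \<or> p = snd J'"
    using endpoint_in_later_gen[OF assms] by blast
  with Suc show ?case using Fn_Suc_endpoint by simp
qed simp

context admissible_lambda
begin

(* \<open>K = \<lambda>(1 + \<rho> + \<rho>\<^sup>2 + \<dots>)\<close> bounds all corrections after level \<open>n\<close>, in units of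
   the graph length at level \<open>n\<close>. *)
definition K :: real where "K = lam / (1 - rho)"

lemma K_pos: "0 < K"
  unfolding K_def using rho_bounds lam_gt by auto

lemma K_fixed_point: "lam + K * rho = K"
  unfolding K_def using rho_bounds by (simp add: field_simps)

lemma graph_length_gen_le: "J \<in> set (gen n) \<Longrightarrow> graph_length lam n J \<le> rho ^ n"
proof (induction n arbitrary: J)
  case 0
  then show ?case by (simp add: graph_length_def chord_stretch_def chord_slope_def)
next
  case (Suc n)
  then obtain P where P: "P \<in> set (gen n)" "J \<in> set (split4 P)" by (auto simp: mem_gen_Suc)
  have "graph_length lam (Suc n) J \<le> rho * graph_length lam n P"
    by (rule graph_length_child_le[OF P])
  also have "\<dots> \<le> rho * rho ^ n"
    using Suc.IH[OF P(1)] rho_bounds by (intro mult_left_mono) auto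
  finally show ?case by simp
qed

lemma Fn_tail_bound:
  "J \<in> set (gen n) \<Longrightarrow> fst J \<le> y \<Longrightarrow> y \<le> snd J
    \<Longrightarrow> \<bar>Fn lam (n + k) y - Fn lam n y\<bar> \<le> K * graph_length lam n J"
proof (induction k arbitrary: n J)
  case 0
  then show ?case using graph_length_nonneg[OF 0(1), of lam] K_pos by simp
next
  case (Suc k)
  obtain a b where J: "J = (a, b)" by force
  have ab: "a < b" using gen_interval[OF Suc.prems(1)] J by simp
  obtain c where c: "c \<in> set (split4 (a, b))" "fst c \<le> y" "y \<le> snd c"
    using split4_covers[OF ab, of y] Suc.prems J by auto
  have c_gen: "c \<in> set (gen (Suc n))"
    using Suc.prems(1) c(1) J by (auto simp: mem_gen_Suc)
  have "Fn lam (Suc n) y - Fn lam n y = lam * graph_length lam n J * hat a b y"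
    using Fn_Suc_on_gen[OF Suc.prems(1), of y] Suc.prems J unfolding graph_length_def by simp
  then have step: "\<bar>Fn lam (Suc n) y - Fn lam n y\<bar> \<le> lam * graph_length lam n J"
    using hat_bounds[OF ab, of y] graph_length_nonneg[OF Suc.prems(1), of lam] lam_gt
    by (simp add: abs_mult mult_left_le)
  have "\<bar>Fn lam (Suc n + k) y - Fn lam (Suc n) y\<bar> \<le> K * graph_length lam (Suc n) c"
    by (rule Suc.IH[OF c_gen c(2,3)])
  also have "\<dots> \<le> K * (rho * graph_length lam n J)"
    using graph_length_child_le[OF Suc.prems(1), of c] c(1) J K_pos by (intro mult_left_mono) auto
  finally have "\<bar>Fn lam (n + Suc k) y - Fn lam n y\<bar> \<le> (lam + K * rho) * graph_length lam n J"
    using step by (simp add: algebra_simps)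
  then show ?case by (simp add: K_fixed_point)
qed

lemma Fn_converges:
  assumes "y \<in> {0..1}"
  shows "(\<lambda>n. Fn lam n y) \<longlonglongrightarrow> Flim lam y"
proof -
  have tail: "\<bar>Fn lam (n + k) y - Fn lam n y\<bar> \<le> K * rho ^ n" for n k
  proof -
    obtain J where "J \<in> set (gen n)" "fst J \<le> y" "y \<le> snd J"
      using gen_covers[OF assms] by blast
    then show ?thesis
      using Fn_tail_bound[of J n y k] graph_length_gen_le[of J n] K_pos
      by (meson mult_left_mono less_imp_le order.trans)
  qed
  have "Cauchy (\<lambda>n. Fn lam n y)"
  proof (rule CauchyI)
    fix e :: real assume "0 < e"
    then obtain M where M: "rho ^ M < e / (2 * K)"
      using real_arch_pow_inv[of "e / (2 * K)" rho] K_pos rho_bounds by auto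
    have near: "\<bar>Fn lam m y - Fn lam M y\<bar> < e / 2" if "M \<le> m" for m
      using tail[of M "m - M"] M K_pos that by (simp add: field_simps)
    have "\<bar>Fn lam m y - Fn lam n y\<bar> < e" if "M \<le> m" "M \<le> n" for m n
      using near[OF that(1)] near[OF that(2)] by arith
    then show "\<exists>M. \<forall>m\<ge>M. \<forall>n\<ge>M. norm (Fn lam m y - Fn lam n y) < e" by auto
  qed
  then show ?thesis
    unfolding Flim_def by (simp add: Cauchy_convergent_iff convergent_LIMSEQ_iff)
qed

lemma Flim_Fn_diff_le:
  assumes "J \<in> set (gen n)" "fst J \<le> y" "y \<le> snd J"
  shows "\<bar>Flim lam y - Fn lam n y\<bar> \<le> K * graph_length lam n J"
proof (rule LIMSEQ_le_const2)
  have "y \<in> {0..1}" using gen_interval[OF assms(1)] assms by auto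
  from LIMSEQ_ignore_initial_segment[OF Fn_converges[OF this], of n]
  show "(\<lambda>k. \<bar>Fn lam (k + n) y - Fn lam n y\<bar>) \<longlonglongrightarrow> \<bar>Flim lam y - Fn lam n y\<bar>"
    by (intro tendsto_intros)
  show "\<exists>N. \<forall>k\<ge>N. \<bar>Fn lam (k + n) y - Fn lam n y\<bar> \<le> K * graph_length lam n J"
    using Fn_tail_bound[OF assms] by (metis add.commute)
qed

lemma Flim_oscillation_le:
  assumes "J \<in> set (gen n)" "u \<in> {fst J..snd J}" "v \<in> {fst J..snd J}"
  shows "\<bar>Flim lam u - Flim lam v\<bar> \<le> (1 + 2 * K) * graph_length lam n J"
proof -
  have "Fn lam n u - Fn lam n v = chord_slope lam n J * (u - v)"
    using Fn_affine_on_gen[OF assms(1) assms(2), of lam] Fn_affine_on_gen[OF assms(1) assms(3), of lam]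
    by (simp add: algebra_simps)
  moreover have "\<bar>chord_slope lam n J\<bar> * \<bar>u - v\<bar> \<le> chord_stretch lam n J * (snd J - fst J)"
    using abs_chord_slope_le_stretch[of lam n J] assms by (intro mult_mono) auto
  ultimately have "\<bar>Fn lam n u - Fn lam n v\<bar> \<le> graph_length lam n J"
    unfolding graph_length_def by (simp add: abs_mult mult.commute)
  moreover have "\<bar>Flim lam u - Fn lam n u\<bar> \<le> K * graph_length lam n J"
    and "\<bar>Flim lam v - Fn lam n v\<bar> \<le> K * graph_length lam n J"
    using Flim_Fn_diff_le assms by auto
  ultimately show ?thesis by (simp add: algebra_simps)
qed

lemma Flim_endpoint:
  assumes "J \<in> set (gen n)" "p = fst J \<or> p = snd J"
  shows "Flim lam p = Fn lam n p"
proof -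
  have "p \<in> {0..1}" using gen_interval[OF assms(1)] assms(2) by auto
  from LIMSEQ_ignore_initial_segment[OF Fn_converges[OF this], of n]
  have "(\<lambda>k. Fn lam n p) \<longlonglongrightarrow> Flim lam p"
    using Fn_endpoint_stable[OF assms] by (simp add: add.commute)
  then show ?thesis using LIMSEQ_unique tendsto_const by blast
qed

end

section \<open>Coding points by cells\<close>

(* The flag records whether \<open>T\<^sup>n\<close> is increasing on the cell: \<open>T\<close> is decreasing only on
   [1/2, 2/3), so the digit 2 reverses it. *)
definition child_of :: "bool \<Rightarrow> nat \<Rightarrow> real \<times> real \<Rightarrow> (real \<times> real) \<times> bool" where
  "child_of ori d J = (let a = fst J; b = snd J in
     if ori then
       (if d = 0 then ((a, a + (b-a)/3), True) else if d = 1 then ((a + (b-a)/3, a + (b-a)/2), True)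
        else if d = 2 then ((a + (b-a)/2, b - (b-a)/3), False) else ((b - (b-a)/3, b), True))
     else
       (if d = 0 then ((b - (b-a)/3, b), False) else if d = 1 then ((a + (b-a)/2, b - (b-a)/3), False)
        else if d = 2 then ((a + (b-a)/3, a + (b-a)/2), True) else ((a, a + (b-a)/3), False)))"

primrec coding :: "real \<Rightarrow> nat \<Rightarrow> (real \<times> real) \<times> bool" where
  "coding x 0 = ((0, 1), True)"
| "coding x (Suc n) = child_of (snd (coding x n)) (udig n x) (fst (coding x n))"

abbreviation cell :: "real \<Rightarrow> nat \<Rightarrow> real \<times> real" where
  "cell x n \<equiv> fst (coding x n)"

abbreviation orientation :: "real \<Rightarrow> nat \<Rightarrow> bool" where
  "orientation x n \<equiv> snd (coding x n)"

definition rel_pos :: "bool \<Rightarrow> real \<times> real \<Rightarrow> real \<Rightarrow> real" where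
  "rel_pos ori J x = (if ori then (x - fst J) / (snd J - fst J) else (snd J - x) / (snd J - fst J))"

lemma child_of_mem: "fst (child_of ori d J) \<in> set (split4 J)"
  by (cases J) (simp add: child_of_def Let_def split4_eq)

lemma cell_in_gen: "cell x n \<in> set (gen n)"
proof (induction n)
  case (Suc n)
  then show ?case
    using child_of_mem[of "orientation x n" "udig n x" "cell x n"] by (auto simp: mem_gen_Suc)
qed simp

lemma T_range: "0 \<le> t \<Longrightarrow> t \<le> 1 \<Longrightarrow> 0 \<le> T t \<and> T t \<le> 1"
  unfolding T_def by auto

lemma T_rel_pos_child:
  assumes "a < b" "0 \<le> t" "t \<le> 1" "t = rel_pos ori (a, b) x"
  shows "T t = rel_pos (snd (child_of ori (U t) (a, b))) (fst (child_of ori (U t) (a, b))) x"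
proof -
  have x: "x = (if ori then a + t * (b - a) else b - t * (b - a))"
    using assms(1,4) unfolding rel_pos_def by (auto simp: field_simps)
  show ?thesis
    using assms(1) unfolding x
    by (cases ori) (auto simp: U_def T_def child_of_def rel_pos_def field_simps)
qed

lemma T_iter_rel_pos:
  assumes "x \<in> {0..1}"
  shows "0 \<le> (T ^^ n) x \<and> (T ^^ n) x \<le> 1 \<and> (T ^^ n) x = rel_pos (orientation x n) (cell x n) x"
proof (induction n)
  case 0
  then show ?case using assms by (simp add: rel_pos_def)
next
  case (Suc n)
  obtain a b where ab: "cell x n = (a, b)" by force
  define t where "t = (T ^^ n) x"
  have ab_lt: "a < b" using gen_interval[OF cell_in_gen[of x n]] ab by simp
  have t: "0 \<le> t" "t \<le> 1" "t = rel_pos (orientation x n) (a, b) x"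
    using Suc ab unfolding t_def by auto
  have "coding x (Suc n) = child_of (orientation x n) (U t) (a, b)"
    using ab by (simp add: udig_def t_def)
  then show ?case
    using T_rel_pos_child[OF ab_lt t] T_range[OF t(1,2)] by (simp add: t_def)
qed

lemma rel_pos_inside:
  assumes "a < b" "t = rel_pos ori (a, b) x"
  shows "0 \<le> t \<Longrightarrow> t \<le> 1 \<Longrightarrow> a \<le> x \<and> x \<le> b"
    and "0 < t \<Longrightarrow> t < 1 \<Longrightarrow> a < x \<and> x < b"
  using assms unfolding rel_pos_def by (auto split: if_splits simp: field_simps)

lemma cell_contains:
  assumes "x \<in> {0..1}"
  shows "fst (cell x n) \<le> x \<and> x \<le> snd (cell x n)"
  using rel_pos_inside(1)[of "fst (cell x n)" "snd (cell x n)"] T_iter_rel_pos[OF assms, of n]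
    gen_interval[OF cell_in_gen[of x n]]
  by auto

section \<open>Hoelder bounds from above\<close>

lemma exists_triadic_scale:
  fixes d L :: real
  assumes "0 < d" "d \<le> L"
  shows "\<exists>k. L / 3 ^ Suc k < d \<and> d \<le> L / 3 ^ k"
proof -
  obtain k0 where "(1/3::real) ^ k0 < d / L"
    using real_arch_pow_inv[of "d / L" "1/3"] assms by auto
  then have P: "L / 3 ^ Suc k0 < d" using assms by (simp add: field_simps power_divide)
  define k where "k = (LEAST k. L / 3 ^ Suc k < d)"
  have "L / 3 ^ Suc k < d" unfolding k_def by (rule LeastI[of _ k0]) (rule P)
  moreover have "d \<le> L / 3 ^ k"
  proof (cases k)
    case (Suc j)
    then have "\<not> L / 3 ^ Suc j < d" using not_less_Least[of j "\<lambda>k. L / 3 ^ Suc k < d"] k_def by simp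
    then show ?thesis using Suc by simp
  qed (use assms in simp)
  ultimately show ?thesis by blast
qed

lemma corner_cell:
  assumes "J \<in> set (gen n)"
  shows "\<exists>J'\<in>set (gen (n + k)). chord_slope lam (n + k) J' = chord_slope lam n J
    \<and> snd J' - fst J' = (snd J - fst J) / 3 ^ k
    \<and> (e = fst J \<longrightarrow> fst J' = e) \<and> (e = snd J \<longrightarrow> snd J' = e)"
proof (induction k)
  case 0
  then show ?case using assms by auto
next
  case (Suc k)
  then obtain J0 where J0: "J0 \<in> set (gen (n + k))" "chord_slope lam (n + k) J0 = chord_slope lam n J"
    "snd J0 - fst J0 = (snd J - fst J) / 3 ^ k" "e = fst J \<longrightarrow> fst J0 = e" "e = snd J \<longrightarrow> snd J0 = e"
    by blast
  obtain a b where ab: "J0 = (a, b)" by force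
  have "fst J < snd J" using gen_interval[OF assms] by simp
  then have "\<not> (e = fst J \<and> e = snd J)" by auto
  with J0(4,5) ab obtain J' where J': "J' = (a, a + (b-a)/3) \<or> J' = (b - (b-a)/3, b)"
    "e = fst J \<longrightarrow> fst J' = e" "e = snd J \<longrightarrow> snd J' = e"
    by (metis fst_conv snd_conv)
  have "J' \<in> set (gen (Suc (n + k)))"
    using J0(1) J'(1) ab by (auto simp: mem_gen_Suc split4_eq intro!: bexI[where x = "(a, b)"])
  moreover have "chord_slope lam (Suc (n + k)) J' = chord_slope lam n J"
    using J'(1) J0(1,2) ab chord_slope_children by auto
  moreover have "snd J' - fst J' = (snd J - fst J) / 3 ^ Suc k"
    using J'(1) J0(3) ab by auto
  ultimately show ?case using J'(2,3) by auto
qed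

context admissible_lambda
begin

lemma Flim_near_endpoint:
  assumes "J \<in> set (gen n)" "e = fst J \<or> e = snd J" "y \<in> {fst J..snd J}"
  shows "\<bar>Flim lam y - Flim lam e\<bar> \<le> 3 * (1 + 2 * K) * chord_stretch lam n J * \<bar>y - e\<bar>"
proof (cases "y = e")
  case False
  define L where "L = snd J - fst J"
  have "0 < \<bar>y - e\<bar>" "\<bar>y - e\<bar> \<le> L" using False assms(2,3) unfolding L_def by auto
  then obtain k where k: "L / 3 ^ Suc k < \<bar>y - e\<bar>" "\<bar>y - e\<bar> \<le> L / 3 ^ k"
    using exists_triadic_scale by blast
  obtain J' where J': "J' \<in> set (gen (n + k))" "chord_slope lam (n + k) J' = chord_slope lam n J"
    "snd J' - fst J' = L / 3 ^ k" "e = fst J \<longrightarrow> fst J' = e" "e = snd J \<longrightarrow> snd J' = e"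
    using corner_cell[OF assms(1), where lam = lam and k = k and e = e] unfolding L_def by blast
  have "y \<in> {fst J'..snd J'}" "e \<in> {fst J'..snd J'}"
    using assms(2,3) J'(3-5) k(2) gen_interval[OF J'(1)] by auto
  then have "\<bar>Flim lam y - Flim lam e\<bar> \<le> (1 + 2 * K) * graph_length lam (n + k) J'"
    by (rule Flim_oscillation_le[OF J'(1)])
  also have "\<dots> = (1 + 2 * K) * chord_stretch lam n J * (3 * (L / 3 ^ Suc k))"
    using J'(2,3) by (simp add: graph_length_def chord_stretch_def)
  also have "\<dots> \<le> (1 + 2 * K) * chord_stretch lam n J * (3 * \<bar>y - e\<bar>)"
    using k(1) K_pos chord_stretch_ge_1[of lam n J] by (intro mult_left_mono) auto
  finally show ?thesis by (simp add: algebra_simps)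
qed simp

definition hoelder_const :: real where "hoelder_const = 3 * (1 + 2 * K) * (1 + 6 * lam)"

lemma hoelder_const_ge: "6 * (1 + 2 * K) \<le> hoelder_const"
proof -
  have "6 * (1 + 2 * K) = 3 * (1 + 2 * K) * 2" by simp
  also have "\<dots> \<le> 3 * (1 + 2 * K) * (1 + 6 * lam)"
    using lam_gt K_pos by (intro mult_left_mono) auto
  finally show ?thesis unfolding hoelder_const_def .
qed

lemma hoelder_const_pos: "0 < hoelder_const"
  unfolding hoelder_const_def using K_pos lam_gt by simp

lemma Flim_near_child_endpoint:
  assumes "J \<in> set (gen n)" "c \<in> set (split4 J)" "e = fst c \<or> e = snd c" "y \<in> {fst c..snd c}"
  shows "\<bar>Flim lam y - Flim lam e\<bar> \<le> hoelder_const * chord_stretch lam n J * \<bar>y - e\<bar>"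
proof -
  have "c \<in> set (gen (Suc n))" using assms(1,2) by (auto simp: mem_gen_Suc)
  from Flim_near_endpoint[OF this assms(3,4)]
  have "\<bar>Flim lam y - Flim lam e\<bar> \<le> 3 * (1 + 2 * K) * chord_stretch lam (Suc n) c * \<bar>y - e\<bar>" .
  also have "\<dots> \<le> 3 * (1 + 2 * K) * ((1 + 6 * lam) * chord_stretch lam n J) * \<bar>y - e\<bar>"
    using chord_stretch_child_le[OF assms(1,2)] lam_gt K_pos
    by (intro mult_left_mono mult_right_mono) auto
  finally show ?thesis by (simp add: hoelder_const_def algebra_simps)
qed

lemma split4_separated:
  assumes "c \<in> set (split4 (a, b))" "d \<in> set (split4 (a, b))" "a < b"
    "x \<in> {fst c..snd c}" "y \<in> {fst d..snd d}" "y \<notin> {fst c..snd c}"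
  shows "snd c = fst d \<or> snd d = fst c \<or> (b - a)/6 \<le> \<bar>y - x\<bar>"
  using assms unfolding split4_eq by (auto simp: field_simps)

lemma Flim_increment_adjacent_children:
  assumes "J \<in> set (gen n)" "c \<in> set (split4 J)" "d \<in> set (split4 J)"
    and "x \<in> {fst c..snd c}" "y \<in> {fst d..snd d}" "snd c = fst d \<or> snd d = fst c"
  shows "\<bar>Flim lam y - Flim lam x\<bar> \<le> hoelder_const * chord_stretch lam n J * \<bar>y - x\<bar>"
proof -
  from assms(6) obtain p where p: "p = fst c \<or> p = snd c" "p = fst d \<or> p = snd d"
    and between: "\<bar>y - x\<bar> = \<bar>y - p\<bar> + \<bar>x - p\<bar>"
  proof
    assume "snd c = fst d"
    then show thesis using assms(4,5) by (intro that[of "fst d"]) auto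
  next
    assume "snd d = fst c"
    then show thesis using assms(4,5) by (intro that[of "fst c"]) auto
  qed
  have "\<bar>Flim lam y - Flim lam x\<bar> \<le> \<bar>Flim lam y - Flim lam p\<bar> + \<bar>Flim lam x - Flim lam p\<bar>"
    by arith
  also have "\<dots> \<le> hoelder_const * chord_stretch lam n J * \<bar>y - p\<bar>
      + hoelder_const * chord_stretch lam n J * \<bar>x - p\<bar>"
    using Flim_near_child_endpoint[OF assms(1,3) p(2) assms(5)]
      Flim_near_child_endpoint[OF assms(1,2) p(1) assms(4)] by simp
  finally show ?thesis by (simp add: between distrib_left)
qed

lemma Flim_increment_separating_cell:
  assumes "x \<in> {0..1}" "y \<in> {fst (cell x n)..snd (cell x n)}"
    and "y \<notin> {fst (cell x (Suc n))..snd (cell x (Suc n))}"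
  shows "\<bar>Flim lam y - Flim lam x\<bar> \<le> hoelder_const * chord_stretch lam n (cell x n) * \<bar>y - x\<bar>"
proof -
  obtain a b where ab: "cell x n = (a, b)" by force
  define s where "s = chord_stretch lam n (a, b)"
  define c where "c = cell x (Suc n)"
  have G: "(a, b) \<in> set (gen n)" "a < b"
    using cell_in_gen[of x n] gen_interval[of "(a, b)" n] ab by auto
  have c: "c \<in> set (split4 (a, b))" "x \<in> {fst c..snd c}" "y \<notin> {fst c..snd c}"
    using child_of_mem ab cell_contains[OF assms(1), of "Suc n"] assms(3) unfolding c_def by auto
  obtain d where d: "d \<in> set (split4 (a, b))" "y \<in> {fst d..snd d}"
    using split4_covers[OF G(2), of y] assms(2) ab by auto
  have "0 \<le> s" unfolding s_def using chord_stretch_ge_1 order_trans zero_le_one by blast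
  consider "snd c = fst d \<or> snd d = fst c" | "(b - a)/6 \<le> \<bar>y - x\<bar>"
    using split4_separated[OF c(1) d(1) G(2) c(2) d(2) c(3)] by blast
  then have "\<bar>Flim lam y - Flim lam x\<bar> \<le> hoelder_const * s * \<bar>y - x\<bar>"
  proof cases
    case 1
    then show ?thesis
      unfolding s_def by (rule Flim_increment_adjacent_children[OF G(1) c(1) d(1) c(2) d(2)])
  next
    case 2
    have "x \<in> {a..b}" "y \<in> {a..b}" using assms(1,2) cell_contains[OF assms(1), of n] ab by auto
    then have "\<bar>Flim lam y - Flim lam x\<bar> \<le> (1 + 2 * K) * ((b - a) * s)"
      using Flim_oscillation_le[OF G(1)] unfolding graph_length_def s_def by simp
    also have "\<dots> \<le> (1 + 2 * K) * ((6 * \<bar>y - x\<bar>) * s)"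
      using 2 K_pos \<open>0 \<le> s\<close> by (intro mult_left_mono mult_right_mono) auto
    also have "\<dots> = 6 * (1 + 2 * K) * (s * \<bar>y - x\<bar>)" by simp
    also have "\<dots> \<le> hoelder_const * s * \<bar>y - x\<bar>"
      using hoelder_const_ge \<open>0 \<le> s\<close> by (simp add: mult.assoc mult_right_mono)
    finally show ?thesis .
  qed
  then show ?thesis using ab s_def by simp
qed

lemma separating_level:
  assumes "x \<in> {0..1}" "y \<in> {0..1}" "y \<noteq> x"
  shows "\<exists>n. y \<in> {fst (cell x n)..snd (cell x n)} \<and> y \<notin> {fst (cell x (Suc n))..snd (cell x (Suc n))}"
proof (rule ccontr)
  assume "\<not> ?thesis"
  then have all: "y \<in> {fst (cell x n)..snd (cell x n)}" for n
    by (induction n) (use assms(2) in auto)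
  obtain N where "(1/3::real) ^ N < \<bar>y - x\<bar>"
    using real_arch_pow_inv[of "\<bar>y - x\<bar>" "1/3"] assms(3) by auto
  moreover have "\<bar>y - x\<bar> \<le> snd (cell x N) - fst (cell x N)"
    using all[of N] cell_contains[OF assms(1), of N] by auto
  ultimately show False using gen_length_le[OF cell_in_gen[of x N]] by simp
qed

lemma Flim_pointwise_hoelder:
  assumes "x \<in> {0..1}" "0 \<le> \<gamma>" "0 < C"
    and stretch: "\<And>n. chord_stretch lam n (cell x n) \<le> C * (snd (cell x n) - fst (cell x n)) powr (-\<gamma>)"
    and "y \<in> {0..1}"
  shows "\<bar>Flim lam y - Flim lam x\<bar> \<le> hoelder_const * C * \<bar>y - x\<bar> powr (1 - \<gamma>)"
proof (cases "y = x")
  case False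
  define r where "r = \<bar>y - x\<bar>"
  obtain n where n: "y \<in> {fst (cell x n)..snd (cell x n)}"
    "y \<notin> {fst (cell x (Suc n))..snd (cell x (Suc n))}"
    using separating_level[OF assms(1,5) False] by blast
  have r: "0 < r" "r \<le> snd (cell x n) - fst (cell x n)"
    using False n(1) cell_contains[OF assms(1), of n] unfolding r_def by auto
  have "chord_stretch lam n (cell x n) \<le> C * (snd (cell x n) - fst (cell x n)) powr (-\<gamma>)"
    by (rule stretch)
  also have "\<dots> \<le> C * r powr (-\<gamma>)"
    using r assms(2,3) by (intro mult_left_mono powr_mono2') auto
  finally have "chord_stretch lam n (cell x n) * r \<le> C * r powr (-\<gamma>) * r"
    using r by (intro mult_right_mono) auto
  also have "\<dots> = C * r powr (1 - \<gamma>)"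
    using r by (simp add: powr_diff powr_minus field_simps)
  finally have "hoelder_const * chord_stretch lam n (cell x n) * r \<le> hoelder_const * C * r powr (1 - \<gamma>)"
    using hoelder_const_pos by (simp add: mult.assoc mult_left_mono)
  with Flim_increment_separating_cell[OF assms(1) n] show ?thesis
    unfolding r_def by simp
qed simp

end

section \<open>No exponent above 1\<close>

lemma power_second_difference_le:
  fixes t1 t2 t3 l :: real
  assumes "t2 = (t1 + t3)/2" "\<bar>t1\<bar> \<le> l" "\<bar>t2\<bar> \<le> l" "\<bar>t3\<bar> \<le> l" "l \<le> 1"
  shows "\<bar>t1 ^ i + t3 ^ i - 2 * t2 ^ i\<bar> \<le> 4 * l\<^sup>2"
proof -
  have "0 \<le> l" using assms by linarith
  consider "i = 0" | "i = 1" | "2 \<le> i" by linarith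
  then show ?thesis
  proof cases
    case 2
    have "t1 + t3 - 2 * t2 = 0" using assms(1) by simp
    with 2 show ?thesis by simp
  next
    case 3
    have small: "\<bar>t ^ i\<bar> \<le> l\<^sup>2" if "\<bar>t\<bar> \<le> l" for t :: real
      using power_mono[OF that, of i] power_decreasing[OF 3 \<open>0 \<le> l\<close> assms(5)]
      by (simp add: power_abs)
    show ?thesis
      using small[OF assms(2)] small[OF assms(3)] small[OF assms(4)] by linarith
  qed simp
qed

lemma abs_second_difference_le:
  fixes f1 f2 f3 q1 q2 q3 :: real
  shows "\<bar>f1 + f3 - 2 * f2\<bar> \<le> \<bar>f1 - q1\<bar> + \<bar>f3 - q3\<bar> + 2 * \<bar>f2 - q2\<bar> + \<bar>q1 + q3 - 2 * q2\<bar>"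
proof -
  have "\<bar>u1 + u3 - 2 * u2 + w\<bar> \<le> \<bar>u1\<bar> + \<bar>u3\<bar> + 2 * \<bar>u2\<bar> + \<bar>w\<bar>" for u1 u2 u3 w :: real
    by arith
  from this[of "f1 - q1" "f3 - q3" "f2 - q2" "q1 + q3 - 2 * q2"] show ?thesis
    by (simp add: algebra_simps)
qed

lemma poly_second_difference_le:
  fixes t1 t2 t3 l :: real
  assumes "t2 = (t1 + t3)/2" "\<bar>t1\<bar> \<le> l" "\<bar>t2\<bar> \<le> l" "\<bar>t3\<bar> \<le> l" "l \<le> 1"
  shows "\<bar>poly P t1 + poly P t3 - 2 * poly P t2\<bar> \<le> 4 * (\<Sum>i\<le>degree P. \<bar>coeff P i\<bar>) * l\<^sup>2"
proof -
  have "poly P t1 + poly P t3 - 2 * poly P t2 = (\<Sum>i\<le>degree P. coeff P i * (t1 ^ i + t3 ^ i - 2 * t2 ^ i))"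
    unfolding poly_altdef by (simp add: algebra_simps sum.distrib sum_subtractf sum_distrib_left)
  also have "\<bar>\<dots>\<bar> \<le> (\<Sum>i\<le>degree P. \<bar>coeff P i\<bar> * (4 * l\<^sup>2))"
    unfolding abs_mult using power_second_difference_le[OF assms]
    by (intro order.trans[OF sum_abs] sum_mono) (simp add: abs_mult mult_left_mono)
  finally show ?thesis by (simp add: sum_distrib_right[symmetric] mult_ac)
qed

context admissible_lambda
begin

lemma Flim_second_difference:
  assumes "(a, b) \<in> set (gen n)"
  shows "Flim lam (a + (b-a)/3) + Flim lam (b - (b-a)/3) - 2 * Flim lam (a + (b-a)/2)
    = - 2 * lam * (b - a) * chord_stretch lam n (a, b)"
proof -
  have "(a, a + (b-a)/3) \<in> set (gen (Suc n))" "(a + (b-a)/2, b - (b-a)/3) \<in> set (gen (Suc n))"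
    using assms by (auto simp: mem_gen_Suc split4_eq intro!: bexI[where x = "(a, b)"])
  then have "Flim lam (a + (b-a)/3) = Fn lam (Suc n) (a + (b-a)/3)"
    "Flim lam (a + (b-a)/2) = Fn lam (Suc n) (a + (b-a)/2)"
    "Flim lam (b - (b-a)/3) = Fn lam (Suc n) (b - (b-a)/3)"
    using Flim_endpoint by auto
  then show ?thesis
    using Fn_Suc_at_nodes[OF assms, of lam] by (simp add: field_simps)
qed

lemma cell_second_difference_bound:
  assumes x: "x \<in> {0..1}" and "0 \<le> \<alpha>"
    and hoelder: "\<forall>y\<in>{0..1}. \<bar>y - x\<bar> < \<delta> \<longrightarrow> \<bar>Flim lam y - poly P (y - x)\<bar> \<le> C * \<bar>y - x\<bar> powr \<alpha>"
    and small: "snd (cell x n) - fst (cell x n) < \<delta>"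
  defines "l \<equiv> snd (cell x n) - fst (cell x n)"
  shows "2 * lam * l \<le> 4 * \<bar>C\<bar> * l powr \<alpha> + 4 * (\<Sum>i\<le>degree P. \<bar>coeff P i\<bar>) * l\<^sup>2"
proof -
  obtain a b where ab: "cell x n = (a, b)" by force
  have G: "(a, b) \<in> set (gen n)" "a < b" "0 \<le> a" "b \<le> 1"
    using cell_in_gen[of x n] gen_interval[of "(a, b)" n] ab by auto
  have "a \<le> x" "x \<le> b" using cell_contains[OF x, of n] ab by auto
  then have near: "\<bar>p - x\<bar> \<le> l" if "p \<in> {a..b}" for p
    using that ab unfolding l_def by auto
  have l1: "l \<le> 1" using G ab unfolding l_def by simp
  have err: "\<bar>Flim lam p - poly P (p - x)\<bar> \<le> \<bar>C\<bar> * l powr \<alpha>" if "p \<in> {a..b}" for p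
  proof -
    have "\<bar>Flim lam p - poly P (p - x)\<bar> \<le> C * \<bar>p - x\<bar> powr \<alpha>"
      using hoelder near[OF that] small G that unfolding l_def by auto
    also have "\<dots> \<le> \<bar>C\<bar> * l powr \<alpha>"
      using near[OF that] assms(2) by (intro mult_mono powr_mono2) auto
    finally show ?thesis .
  qed
  define p1 p2 p3 where "p1 = a + (b-a)/3" and "p2 = a + (b-a)/2" and "p3 = b - (b-a)/3"
  have p: "p1 \<in> {a..b}" "p2 \<in> {a..b}" "p3 \<in> {a..b}" "p2 - x = ((p1 - x) + (p3 - x))/2"
    using G unfolding p1_def p2_def p3_def by (auto simp: field_simps)
  have "2 * lam * l \<le> 2 * lam * l * chord_stretch lam n (a, b)"
    using chord_stretch_ge_1[of lam n "(a, b)"] lam_gt G ab unfolding l_def by simp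
  also have "\<dots> = \<bar>Flim lam p1 + Flim lam p3 - 2 * Flim lam p2\<bar>"
    using Flim_second_difference[OF G(1)] chord_stretch_ge_1[of lam n "(a, b)"] lam_gt G ab
    unfolding p1_def p2_def p3_def l_def by simp
  also have "\<dots> \<le> \<bar>Flim lam p1 - poly P (p1 - x)\<bar> + \<bar>Flim lam p3 - poly P (p3 - x)\<bar>
      + 2 * \<bar>Flim lam p2 - poly P (p2 - x)\<bar> + \<bar>poly P (p1 - x) + poly P (p3 - x) - 2 * poly P (p2 - x)\<bar>"
    by (rule abs_second_difference_le)
  also have "\<dots> \<le> 4 * \<bar>C\<bar> * l powr \<alpha> + 4 * (\<Sum>i\<le>degree P. \<bar>coeff P i\<bar>) * l\<^sup>2"
    using err[OF p(1)] err[OF p(2)] err[OF p(3)]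
      poly_second_difference_le[OF p(4) near[OF p(1)] near[OF p(2)] near[OF p(3)] l1, of P]
    by linarith
  finally show ?thesis .
qed

lemma not_pw_hoelder_gt_1:
  assumes x: "x \<in> {0..1}" and "1 < \<alpha>"
  shows "\<not> pw_hoelder {0..1} (Flim lam) x \<alpha>"
proof
  assume "pw_hoelder {0..1} (Flim lam) x \<alpha>"
  then obtain P :: "real poly" and C \<delta> where "\<delta> > 0"
    and hoelder: "\<forall>y\<in>{0..1}. \<bar>y - x\<bar> < \<delta> \<longrightarrow> \<bar>Flim lam y - poly P (y - x)\<bar> \<le> C * \<bar>y - x\<bar> powr \<alpha>"
    unfolding pw_hoelder_def by blast
  define A where "A = (\<Sum>i\<le>degree P. \<bar>coeff P i\<bar>)"
  define l where "l n = snd (cell x n) - fst (cell x n)" for n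
  have l_pos: "0 < l n" for n
    using gen_interval[OF cell_in_gen[of x n]] unfolding l_def by simp
  have "l \<longlonglongrightarrow> 0"
  proof (rule tendsto_sandwich[of "\<lambda>_. 0" _ _ "\<lambda>n. (1/3) ^ n"])
    show "\<forall>\<^sub>F n in sequentially. 0 \<le> l n" using l_pos by (simp add: less_imp_le)
    show "\<forall>\<^sub>F n in sequentially. l n \<le> (1/3) ^ n"
      using gen_length_le[OF cell_in_gen] by (simp add: l_def)
  qed (auto intro: LIMSEQ_power_zero)
  moreover from this have "(\<lambda>n. l n powr (\<alpha> - 1)) \<longlonglongrightarrow> 0"
    by (rule tendsto_zero_powrI[OF _ tendsto_const]) (use \<open>1 < \<alpha>\<close> l_pos in \<open>auto simp: less_imp_le\<close>)
  ultimately have bound_lim: "(\<lambda>n. 4 * \<bar>C\<bar> * l n powr (\<alpha> - 1) + 4 * A * l n) \<longlonglongrightarrow> 4 * \<bar>C\<bar> * 0 + 4 * A * 0"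
    by (intro tendsto_add tendsto_mult tendsto_const)
  have "\<forall>\<^sub>F n in sequentially. 2 * lam \<le> 4 * \<bar>C\<bar> * l n powr (\<alpha> - 1) + 4 * A * l n"
    using order_tendstoD(2)[OF \<open>l \<longlonglongrightarrow> 0\<close> \<open>\<delta> > 0\<close>]
  proof eventually_elim
    case (elim n)
    have "2 * lam * l n \<le> 4 * \<bar>C\<bar> * l n powr \<alpha> + 4 * A * (l n)\<^sup>2"
      using cell_second_difference_bound[OF x _ hoelder, of n] elim \<open>1 < \<alpha>\<close>
      unfolding A_def l_def by simp
    also have "\<dots> = l n * (4 * \<bar>C\<bar> * l n powr (\<alpha> - 1) + 4 * A * l n)"
      using l_pos[of n] by (simp add: powr_diff power2_eq_square field_simps)
    finally show ?case using l_pos[of n] by simp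
  qed
  from tendsto_lowerbound[OF bound_lim this] have "2 * lam \<le> 0" by simp
  then show False using lam_gt by simp
qed

end

section \<open>Slopes along the orbit\<close>

lemma linear_growth_bound:
  fixes s :: "nat \<Rightarrow> real"
  assumes "(\<lambda>n. s n / real n) \<longlonglongrightarrow> E" "0 < \<epsilon>"
  obtains C where "\<And>n. \<bar>s n - E * real n\<bar> \<le> \<epsilon> * real n + C"
proof -
  obtain N where N: "\<And>n. N \<le> n \<Longrightarrow> \<bar>s n / real n - E\<bar> < \<epsilon>"
    using tendstoD[OF assms] unfolding eventually_sequentially dist_real_def by blast
  define C where "C = Max ((\<lambda>n. \<bar>s n - E * real n\<bar>) ` {..N})"
  have C: "\<bar>s n - E * real n\<bar> \<le> C" if "n \<le> N" for n
    unfolding C_def using that by (intro Max_ge) auto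
  have "\<bar>s n - E * real n\<bar> \<le> \<epsilon> * real n + C" for n
  proof (cases "n \<le> N")
    case True
    moreover have "0 \<le> \<epsilon> * real n" using assms(2) by simp
    ultimately show ?thesis using C[of n] by linarith
  next
    case False
    then have "0 < real n" by simp
    then have "\<bar>s n - E * real n\<bar> = real n * \<bar>s n / real n - E\<bar>"
      by (simp add: abs_mult_pos' field_simps)
    also have "\<dots> \<le> \<epsilon> * real n" using N[of n] False \<open>0 < real n\<close> by simp
    finally show ?thesis using C[of 0] by simp
  qed
  then show ?thesis by (rule that)
qed

lemma betacount_Suc: "betacount i x (Suc n) = betacount i x n + (if udig n x = i then 1 else 0)"
proof -
  have "{k. k < Suc n \<and> udig k x = i}
      = (if udig n x = i then insert n {k. k < n \<and> udig k x = i} else {k. k < n \<and> udig k x = i})"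
    by (auto simp: less_Suc_eq)
  then show ?thesis unfolding betacount_def by (simp add: card_insert_disjoint)
qed

definition oriented_slope :: "real \<Rightarrow> real \<Rightarrow> nat \<Rightarrow> real" where
  "oriented_slope lam x n =
     (if orientation x n then chord_slope lam n (cell x n) else - chord_slope lam n (cell x n))"

definition slope_step :: "real \<Rightarrow> nat \<Rightarrow> real \<Rightarrow> real" where
  "slope_step lam d s =
     (if d = 1 then s + 6 * lam * sqrt (1 + s\<^sup>2) else if d = 2 then 6 * lam * sqrt (1 + s\<^sup>2) - s else s)"

lemma chord_stretch_cell: "chord_stretch lam n (cell x n) = sqrt (1 + (oriented_slope lam x n)\<^sup>2)"
  unfolding chord_stretch_def oriented_slope_def by simp

lemma oriented_slope_Suc:
  "oriented_slope lam x (Suc n) = slope_step lam (udig n x) (oriented_slope lam x n)"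
proof -
  obtain a b where ab: "cell x n = (a, b)" by force
  have G: "(a, b) \<in> set (gen n)" using cell_in_gen[of x n] ab by simp
  define m where "m = chord_slope lam n (a, b)"
  define s where "s = chord_stretch lam n (a, b)"
  have o: "oriented_slope lam x n = (if orientation x n then m else - m)"
    unfolding oriented_slope_def m_def ab ..
  have step: "slope_step lam d (oriented_slope lam x n) =
      (if d = 1 then oriented_slope lam x n + 6 * lam * s
       else if d = 2 then 6 * lam * s - oriented_slope lam x n else oriented_slope lam x n)" for d
    using chord_stretch_cell[of lam n x] ab unfolding slope_step_def s_def by simp
  have child: "oriented_slope lam x (Suc n) =
      (let c = child_of (orientation x n) (udig n x) (a, b)
       in if snd c then chord_slope lam (Suc n) (fst c) else - chord_slope lam (Suc n) (fst c))"
    unfolding oriented_slope_def coding.simps ab Let_def ..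
  show ?thesis
    unfolding child step unfolding o
    using chord_slope_children[OF G, of lam, folded m_def s_def]
    by (cases "orientation x n") (simp_all add: child_of_def Let_def)
qed

context admissible_lambda
begin

definition gain :: "nat \<Rightarrow> real" where
  "gain d = (if d = 1 then 6 * lam + 1 else if d = 2 then 6 * lam - 1 else 1)"

definition log_gain :: "real \<Rightarrow> nat \<Rightarrow> real" where
  "log_gain x n = real (betacount 1 x n) * ln (6 * lam + 1) + real (betacount 2 x n) * ln (6 * lam - 1)"

lemma gain_pos: "0 < gain d"
  unfolding gain_def using lam_gt by auto

lemma exp_log_gain_Suc: "exp (log_gain x (Suc n) - log_gain x n) = gain (udig n x)"
proof -
  have "log_gain x (Suc n) - log_gain x n
      = (if udig n x = 1 then ln (6 * lam + 1) else 0) + (if udig n x = 2 then ln (6 * lam - 1) else 0)"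
    unfolding log_gain_def betacount_Suc by (auto simp: algebra_simps)
  then show ?thesis unfolding gain_def using lam_gt by auto
qed

lemma log_gain_average_tendsto:
  assumes "(\<lambda>n. real (betacount 1 x n) / real n) \<longlonglongrightarrow> b1"
    and "(\<lambda>n. real (betacount 2 x n) / real n) \<longlonglongrightarrow> b2"
  shows "(\<lambda>n. log_gain x n / real n) \<longlonglongrightarrow> b1 * ln (6 * lam + 1) + b2 * ln (6 * lam - 1)"
proof -
  have "(\<lambda>n. real (betacount 1 x n) / real n * ln (6 * lam + 1)
        + real (betacount 2 x n) / real n * ln (6 * lam - 1))
      \<longlonglongrightarrow> b1 * ln (6 * lam + 1) + b2 * ln (6 * lam - 1)"
    by (intro tendsto_intros assms)
  then show ?thesis unfolding log_gain_def by (simp add: add_divide_distrib)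
qed

lemma log_gain_eventually_const:
  assumes "\<forall>k\<ge>N. udig k x \<noteq> 1 \<and> udig k x \<noteq> 2" "N \<le> n"
  shows "log_gain x n = log_gain x N"
  using assms(2)
proof (induction n rule: dec_induct)
  case (step n)
  then have "udig n x \<noteq> 1" "udig n x \<noteq> 2" using assms(1) by auto
  then have "log_gain x (Suc n) = log_gain x n" by (simp add: log_gain_def betacount_Suc)
  with step.IH show ?case by simp
qed simp

lemma digit_1_or_2_infinitely_often:
  assumes "(\<lambda>n. log_gain x n / real n) \<longlonglongrightarrow> E" "E \<noteq> 0"
  shows "\<exists>k\<ge>N. udig k x = 1 \<or> udig k x = 2"
proof (rule ccontr)
  assume "\<not> ?thesis"
  then have "\<forall>k\<ge>N. udig k x \<noteq> 1 \<and> udig k x \<noteq> 2" by auto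
  then have "log_gain x N / real n = log_gain x n / real n" if "N \<le> n" for n
    using log_gain_eventually_const that by metis
  then have "(\<lambda>n. log_gain x n / real n) \<longlonglongrightarrow> 0"
    by (intro Lim_transform_eventually[OF lim_const_over_n]) (auto simp only: eventually_sequentially)
  with LIMSEQ_unique[OF assms(1)] assms(2) show False by simp
qed

lemma oriented_slope_nonneg: "0 \<le> oriented_slope lam x n"
proof (induction n)
  case 0
  then show ?case by (simp add: oriented_slope_def chord_slope_def)
next
  case (Suc n)
  define s where "s = oriented_slope lam x n"
  have "1 * sqrt (1 + s\<^sup>2) \<le> 6 * lam * sqrt (1 + s\<^sup>2)"
    using lam_gt by (intro mult_right_mono) auto
  moreover have "s \<le> sqrt (1 + s\<^sup>2)" by (simp add: real_le_rsqrt)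
  moreover have "0 \<le> 6 * lam * sqrt (1 + s\<^sup>2)" using lam_gt by simp
  ultimately show ?case using Suc unfolding oriented_slope_Suc slope_step_def s_def[symmetric] by auto
qed

lemma oriented_slope_Suc_ge: "gain (udig n x) * oriented_slope lam x n \<le> oriented_slope lam x (Suc n)"
proof -
  define s where "s = oriented_slope lam x n"
  have "6 * lam * s \<le> 6 * lam * sqrt (1 + s\<^sup>2)"
    using lam_gt by (intro mult_left_mono) (auto simp: real_le_rsqrt)
  then show ?thesis
    unfolding oriented_slope_Suc slope_step_def gain_def s_def[symmetric] by (auto simp: algebra_simps)
qed

lemma oriented_slope_after_digit_1_2:
  assumes "udig n x = 1 \<or> udig n x = 2"
  shows "6 * lam - 1 \<le> oriented_slope lam x (Suc n)"
proof -
  define s where "s = oriented_slope lam x n"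
  define g where "g = sqrt (1 + s\<^sup>2)"
  have "0 \<le> s" unfolding s_def by (rule oriented_slope_nonneg)
  have g: "s \<le> g" "1 \<le> g" unfolding g_def by (auto simp: real_le_rsqrt)
  have "(6 * lam - 1) * 1 \<le> (6 * lam - 1) * g" "6 * lam * 1 \<le> 6 * lam * g"
    using g lam_gt by (intro mult_left_mono; simp)+
  with assms g \<open>0 \<le> s\<close> show ?thesis
    unfolding oriented_slope_Suc slope_step_def s_def[symmetric] g_def[symmetric] by (auto simp: algebra_simps)
qed

lemma stretch_Suc_le:
  "sqrt (1 + (oriented_slope lam x (Suc n))\<^sup>2) \<le> gain (udig n x) * sqrt (1 + (oriented_slope lam x n)\<^sup>2) + 2"
proof -
  define s where "s = oriented_slope lam x n"
  define g where "g = sqrt (1 + s\<^sup>2)"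
  have "0 \<le> s" unfolding s_def by (rule oriented_slope_nonneg)
  have g: "s \<le> g" "1 \<le> g" unfolding g_def by (auto simp: real_le_rsqrt)
  have "g \<le> s + 1"
    unfolding g_def using \<open>0 \<le> s\<close> by (intro real_le_lsqrt) (auto simp: power2_eq_square algebra_simps)
  have up: "sqrt (1 + (s + 6 * lam * g)\<^sup>2) \<le> (1 + 6 * lam) * g"
    using sqrt_one_plus_shifted_le[of g s "6 * lam"] lam_gt unfolding g_def by simp
  have "1 * g \<le> (6 * lam) * g" using lam_gt g by (intro mult_right_mono) auto
  then have "0 \<le> 6 * lam * g - s" using g by linarith
  then have "sqrt (1 + (6 * lam * g - s)\<^sup>2) \<le> 1 + (6 * lam * g - s)"
    by (intro real_le_lsqrt) (auto simp: power2_eq_square algebra_simps)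
  moreover have "(6 * lam - 1) * g + 2 = 1 + (6 * lam * g - s) + (s + 1 - g)"
    by (simp add: algebra_simps)
  ultimately have down: "sqrt (1 + (6 * lam * g - s)\<^sup>2) \<le> (6 * lam - 1) * g + 2"
    using \<open>g \<le> s + 1\<close> by linarith
  consider "udig n x = 1" | "udig n x = 2" | "udig n x \<noteq> 1" "udig n x \<noteq> 2" by blast
  then show ?thesis
  proof cases
    case 1
    with up show ?thesis
      unfolding oriented_slope_Suc slope_step_def gain_def s_def[symmetric] g_def[symmetric]
      by (simp add: add.commute)
  next
    case 2
    with down show ?thesis
      unfolding oriented_slope_Suc slope_step_def gain_def s_def[symmetric] g_def[symmetric] by simp
  next
    case 3
    then show ?thesis
      unfolding oriented_slope_Suc slope_step_def gain_def s_def[symmetric] by (simp add: g_def)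
  qed
qed

lemma oriented_slope_growth:
  "m \<le> n \<Longrightarrow> oriented_slope lam x m * exp (log_gain x n - log_gain x m) \<le> oriented_slope lam x n"
proof (induction n rule: dec_induct)
  case (step n)
  have "oriented_slope lam x m * exp (log_gain x (Suc n) - log_gain x m)
      = gain (udig n x) * (oriented_slope lam x m * exp (log_gain x n - log_gain x m))"
    by (simp add: exp_log_gain_Suc[symmetric] exp_add[symmetric])
  also have "\<dots> \<le> gain (udig n x) * oriented_slope lam x n"
    using step.IH gain_pos by (intro mult_left_mono) (auto simp: less_imp_le)
  also have "\<dots> \<le> oriented_slope lam x (Suc n)" by (rule oriented_slope_Suc_ge)
  finally show ?case .
qed simp

lemma stretch_le_gain_sum:
  "sqrt (1 + (oriented_slope lam x n)\<^sup>2) \<le> 2 * (\<Sum>j\<le>n. exp (log_gain x n - log_gain x j))"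
proof (induction n)
  case 0
  then show ?case by (simp add: oriented_slope_def chord_slope_def)
next
  case (Suc n)
  have shift: "gain (udig n x) * exp (log_gain x n - log_gain x j)
      = exp (log_gain x (Suc n) - log_gain x j)" for j
    by (simp add: exp_log_gain_Suc[symmetric] exp_add[symmetric])
  have "sqrt (1 + (oriented_slope lam x (Suc n))\<^sup>2)
      \<le> gain (udig n x) * sqrt (1 + (oriented_slope lam x n)\<^sup>2) + 2"
    by (rule stretch_Suc_le)
  also have "\<dots> \<le> gain (udig n x) * (2 * (\<Sum>j\<le>n. exp (log_gain x n - log_gain x j))) + 2"
    using Suc gain_pos[of "udig n x"] by (intro add_right_mono mult_left_mono) auto
  also have "\<dots> = 2 * (\<Sum>j\<le>Suc n. exp (log_gain x (Suc n) - log_gain x j))"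
    by (simp add: sum_distrib_left shift algebra_simps)
  finally show ?case .
qed

end

section \<open>The two regimes\<close>

lemma T_iter_fixed_points: "(T ^^ k) 0 = 0" "(T ^^ k) 1 = 1"
  by (induction k) (auto simp: T_def)

lemma T_iter_interior:
  assumes "x \<in> {0..1}" "x \<notin> Eset"
  shows "0 < (T ^^ n) x \<and> (T ^^ n) x < 1"
proof -
  have shift: "(T ^^ k) x = (T ^^ (k - n)) ((T ^^ n) x)" if "n \<le> k" for k
    using that by (metis funpow_add le_add_diff_inverse2 o_apply)
  have "(T ^^ n) x \<noteq> 0"
  proof
    assume start: "(T ^^ n) x = 0"
    have "udig k x = 0" if "n \<le> k" for k
      using shift[OF that] unfolding udig_def start T_iter_fixed_points by (simp add: U_def)
    then have "\<forall>k\<ge>n. udig k x = 0" by blast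
    with assms(2) show False unfolding Eset_def by blast
  qed
  moreover have "(T ^^ n) x \<noteq> 1"
  proof
    assume start: "(T ^^ n) x = 1"
    have "udig k x = 3" if "n \<le> k" for k
      using shift[OF that] unfolding udig_def start T_iter_fixed_points by (simp add: U_def)
    then have "\<forall>k\<ge>n. udig k x = 3" by blast
    with assms(2) show False unfolding Eset_def by blast
  qed
  ultimately show ?thesis using T_iter_rel_pos[OF assms(1), of n] by auto
qed

lemma deriv_Fn_interior:
  assumes "(a, b) \<in> set (gen n)" "a < x" "x < b"
  shows "deriv (Fn lam n) x = chord_slope lam n (a, b)"
proof (rule DERIV_imp_deriv)
  let ?g = "\<lambda>y. Fn lam n a + chord_slope lam n (a, b) * (y - a)"
  have "(?g has_field_derivative chord_slope lam n (a, b)) (at x)"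
    by (auto intro!: derivative_eq_intros)
  then show "(Fn lam n has_field_derivative chord_slope lam n (a, b)) (at x)"
  proof (rule has_field_derivative_transform_within_open[of _ _ _ "{a<..<b}"])
    fix y assume "y \<in> {a<..<b}"
    then show "?g y = Fn lam n y" using Fn_affine_on_gen[OF assms(1), of y lam] by simp
  qed (use assms in auto)
qed

context admissible_lambda
begin

lemma abs_slope_eq_oriented_slope:
  assumes "x \<in> {0..1}" "x \<notin> Eset"
  shows "\<bar>slope lam n x\<bar> = oriented_slope lam x n"
proof -
  obtain a b where ab: "cell x n = (a, b)" by force
  have G: "(a, b) \<in> set (gen n)" "a < b" using cell_in_gen[of x n] gen_interval[of "(a, b)" n] ab by auto
  have "(T ^^ n) x = rel_pos (orientation x n) (a, b) x"
    using T_iter_rel_pos[OF assms(1), of n] ab by simp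
  with T_iter_interior[OF assms, of n] have "a < x" "x < b"
    using rel_pos_inside(2)[OF G(2) refl, of "orientation x n" x] by auto
  then have "slope lam n x = chord_slope lam n (a, b)"
    unfolding slope_def using deriv_Fn_interior[OF G(1)] by simp
  then show ?thesis
    using oriented_slope_nonneg[of x n] ab unfolding oriented_slope_def by (auto split: if_splits)
qed

lemma oriented_slope_tendsto_infinity:
  assumes avg: "(\<lambda>n. log_gain x n / real n) \<longlonglongrightarrow> E" and "0 < E"
  shows "filterlim (oriented_slope lam x) at_top sequentially"
proof -
  obtain k where "udig k x = 1 \<or> udig k x = 2"
    using digit_1_or_2_infinitely_often[OF avg] \<open>0 < E\<close> by force
  then have start: "6 * lam - 1 \<le> oriented_slope lam x (Suc k)"
    by (rule oriented_slope_after_digit_1_2)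
  obtain C where C: "\<And>n. \<bar>log_gain x n - E * real n\<bar> \<le> E / 2 * real n + C"
    using linear_growth_bound[OF avg, of "E / 2"] \<open>0 < E\<close> by auto
  define c where "c = 1 - C - log_gain x (Suc k)"
  have "(6 * lam - 1) * (c + E / 2 * real n) \<le> oriented_slope lam x n" if "Suc k \<le> n" for n
  proof -
    have "c + E / 2 * real n \<le> 1 + (log_gain x n - log_gain x (Suc k))"
      using C[of n] unfolding c_def abs_le_iff by linarith
    also have "\<dots> \<le> exp (log_gain x n - log_gain x (Suc k))" by (rule exp_ge_add_one_self)
    finally have "(6 * lam - 1) * (c + E / 2 * real n)
        \<le> (6 * lam - 1) * exp (log_gain x n - log_gain x (Suc k))"
      using lam_gt by (intro mult_left_mono) auto
    also have "\<dots> \<le> oriented_slope lam x (Suc k) * exp (log_gain x n - log_gain x (Suc k))"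
      using start by (intro mult_right_mono) auto
    also have "\<dots> \<le> oriented_slope lam x n" by (rule oriented_slope_growth[OF that])
    finally show ?thesis .
  qed
  then have "\<forall>\<^sub>F n in sequentially. (6 * lam - 1) * (c + E / 2 * real n) \<le> oriented_slope lam x n"
    unfolding eventually_sequentially by blast
  moreover have "filterlim (\<lambda>n. (6 * lam - 1) * (c + E / 2 * real n)) at_top sequentially"
    using lam_gt \<open>0 < E\<close>
    by (intro filterlim_tendsto_pos_mult_at_top[OF tendsto_const]
        filterlim_tendsto_add_at_top[OF tendsto_const]
        filterlim_tendsto_pos_mult_at_top[OF tendsto_const _ filterlim_real_sequentially]) auto
  ultimately show ?thesis by (rule filterlim_at_top_mono[rotated])
qed

lemma stretch_cell_bound:
  assumes avg: "(\<lambda>n. log_gain x n / real n) \<longlonglongrightarrow> E" and "E \<le> 0" "0 < \<gamma>"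
  shows "\<exists>C>0. \<forall>n. chord_stretch lam n (cell x n) \<le> C * (snd (cell x n) - fst (cell x n)) powr (-\<gamma>)"
proof -
  \<comment> \<open>\<open>3\<epsilon> \<le> \<gamma> ln 3\<close> turns the growth \<open>exp (3\<epsilon>n)\<close> into \<open>(3\<^sup>-\<^sup>n) powr (-\<gamma>)\<close>.\<close>
  define \<epsilon> where "\<epsilon> = min 1 (\<gamma> * ln 3 / 3)"
  have \<epsilon>: "0 < \<epsilon>" "\<epsilon> \<le> 1" "3 * \<epsilon> \<le> \<gamma> * ln 3"
    unfolding \<epsilon>_def using \<open>0 < \<gamma>\<close> by auto
  obtain C1 where C1: "\<And>n. \<bar>log_gain x n - E * real n\<bar> \<le> \<epsilon> * real n + C1"
    using linear_growth_bound[OF avg \<epsilon>(1)] by blast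
  define C where "C = 2 * exp (2 * C1) / \<epsilon>"
  have "C > 0" unfolding C_def using \<epsilon> by simp
  have "chord_stretch lam n (cell x n) \<le> C * (snd (cell x n) - fst (cell x n)) powr (-\<gamma>)" for n
  proof -
    have term_le: "exp (log_gain x n - log_gain x j) \<le> exp (2 * \<epsilon> * real n + 2 * C1)" if "j \<le> n" for j
    proof -
      have "E * (real n - real j) \<le> 0" using \<open>E \<le> 0\<close> that by (simp add: mult_nonpos_nonneg)
      moreover have "\<epsilon> * real j \<le> \<epsilon> * real n" using \<epsilon> that by simp
      ultimately show ?thesis using C1[of n] C1[of j] by (simp add: abs_le_iff algebra_simps)
    qed
    have "\<epsilon> * (real n + 1) = \<epsilon> * real n + \<epsilon>" by (simp add: algebra_simps)
    then have "\<epsilon> * (real n + 1) \<le> exp (\<epsilon> * real n)"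
      using exp_ge_add_one_self[of "\<epsilon> * real n"] \<epsilon>(2) by linarith
    then have "real n + 1 \<le> exp (\<epsilon> * real n) / \<epsilon>"
      using \<epsilon>(1) by (simp add: field_simps mult.commute)
    have "chord_stretch lam n (cell x n) \<le> 2 * (\<Sum>j\<le>n. exp (log_gain x n - log_gain x j))"
      using stretch_le_gain_sum chord_stretch_cell by simp
    also have "\<dots> \<le> 2 * (\<Sum>j\<le>n. exp (2 * \<epsilon> * real n + 2 * C1))"
      using term_le by (intro mult_left_mono sum_mono) auto
    also have "\<dots> = 2 * ((real n + 1) * exp (2 * \<epsilon> * real n + 2 * C1))" by simp
    also have "\<dots> \<le> 2 * (exp (\<epsilon> * real n) / \<epsilon> * exp (2 * \<epsilon> * real n + 2 * C1))"
      using \<open>real n + 1 \<le> _\<close> by (intro mult_left_mono mult_right_mono) auto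
    also have "\<dots> = C * exp (3 * \<epsilon> * real n)"
      unfolding C_def by (simp add: exp_add[symmetric] field_simps)
    also have "\<dots> \<le> C * exp (\<gamma> * ln 3 * real n)"
      using \<epsilon> \<open>C > 0\<close> by (intro mult_left_mono) (auto intro: mult_right_mono)
    also have "\<dots> = C * ((1/3) ^ n) powr (-\<gamma>)"
      by (simp add: powr_def ln_realpow ln_div)
    also have "\<dots> \<le> C * (snd (cell x n) - fst (cell x n)) powr (-\<gamma>)"
      using gen_interval[OF cell_in_gen[of x n]] gen_length_le[OF cell_in_gen[of x n]] \<open>C > 0\<close> \<open>0 < \<gamma>\<close>
      by (intro mult_left_mono powr_mono2') auto
    finally show ?thesis .
  qed
  with \<open>C > 0\<close> show ?thesis by blast
qed

lemma hoelder_exp_Flim_eq_1: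
  assumes x: "x \<in> {0..1}" and avg: "(\<lambda>n. log_gain x n / real n) \<longlonglongrightarrow> E" and "E \<le> 0"
  shows "hoelder_exp {0..1} (Flim lam) x = 1"
proof -
  define A where "A = {\<alpha>. \<alpha> \<ge> 0 \<and> pw_hoelder {0..1} (Flim lam) x \<alpha>}"
  have below_1: "\<alpha> \<in> A" if "0 < \<alpha>" "\<alpha> < 1" for \<alpha>
  proof -
    define \<gamma> where "\<gamma> = 1 - \<alpha>"
    have "0 < \<gamma>" "1 - \<gamma> = \<alpha>" using that unfolding \<gamma>_def by auto
    then obtain C where "0 < C"
      and "\<forall>n. chord_stretch lam n (cell x n) \<le> C * (snd (cell x n) - fst (cell x n)) powr (-\<gamma>)"
      using stretch_cell_bound[OF avg \<open>E \<le> 0\<close>] by blast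
    then have "\<forall>y\<in>{0..1}. \<bar>Flim lam y - Flim lam x\<bar> \<le> hoelder_const * C * \<bar>y - x\<bar> powr \<alpha>"
      using Flim_pointwise_hoelder[OF x, of \<gamma> C] \<open>0 < \<gamma>\<close> \<open>1 - \<gamma> = \<alpha>\<close> by auto
    then have "pw_hoelder {0..1} (Flim lam) x \<alpha>"
      unfolding pw_hoelder_def
    proof (intro exI conjI)
      show "degree [:Flim lam x:] \<le> nat \<lfloor>\<alpha>\<rfloor>" by simp
      show "(1::real) > 0" by simp
    qed (use \<open>\<forall>y\<in>{0..1}. _\<close> in auto)
    then show ?thesis unfolding A_def using that by simp
  qed
  have "\<alpha> \<le> 1" if "\<alpha> \<in> A" for \<alpha>
    using not_pw_hoelder_gt_1[OF x, of \<alpha>] that unfolding A_def by force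
  then have "Sup (ereal ` A) = 1"
  proof (intro Sup_eqI)
    fix u assume u: "\<And>z. z \<in> ereal ` A \<Longrightarrow> z \<le> u"
    show "1 \<le> u"
    proof (rule dense_le_bounded[of 0])
      fix w :: ereal assume w: "0 < w" "w < 1"
      then obtain r where "w = ereal r" "0 < r" "r < 1" by (cases w) auto
      then show "w \<le> u" using u below_1 by auto
    qed simp
  qed auto
  then show ?thesis unfolding hoelder_exp_def A_def .
qed

end

theorem lemma5p3:
  fixes lam :: real and \<beta> :: "nat \<Rightarrow> real" and x :: real
  assumes "1/6 < lam" and "lam < 5/6"
    and "\<forall>i<4. 0 \<le> \<beta> i" and "(\<Sum>i<4. \<beta> i) = 1"
    and "x \<in> {0..1}"
    and "\<forall>i<4. (\<lambda>n. real (betacount i x n) / real n) \<longlonglongrightarrow> \<beta> i"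
  shows "(\<beta> 1 * ln (6*lam + 1) + \<beta> 2 * ln (6*lam - 1) > 0 \<longrightarrow> x \<in> Iset lam)
       \<and> (\<beta> 1 * ln (6*lam + 1) + \<beta> 2 * ln (6*lam - 1) \<le> 0 \<longrightarrow>
            hoelder_exp {0..1} (Flim lam) x = 1)"
proof -
  \<comment> \<open>Only the frequencies of the digits 1 and 2 enter.\<close>
  interpret admissible_lambda lam using assms(1,2) by unfold_locales
  have avg: "(\<lambda>n. log_gain x n / real n) \<longlonglongrightarrow> \<beta> 1 * ln (6*lam + 1) + \<beta> 2 * ln (6*lam - 1)"
    using assms(6) by (intro log_gain_average_tendsto) auto
  show ?thesis
  proof (intro conjI impI)
    assume E: "\<beta> 1 * ln (6*lam + 1) + \<beta> 2 * ln (6*lam - 1) > 0"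
    have "x \<notin> Eset"
    proof
      assume "x \<in> Eset"
      then obtain N where "\<forall>n\<ge>N. udig n x = 0 \<or> udig n x = 3" unfolding Eset_def by auto
      with digit_1_or_2_infinitely_often[OF avg, of N] E show False by force
    qed
    with oriented_slope_tendsto_infinity[OF avg E] abs_slope_eq_oriented_slope[OF assms(5)]
    show "x \<in> Iset lam" unfolding Iset_def using assms(5) by simp
  next
    assume "\<beta> 1 * ln (6*lam + 1) + \<beta> 2 * ln (6*lam - 1) \<le> 0"
    with assms(5) avg show "hoelder_exp {0..1} (Flim lam) x = 1" by (rule hoelder_exp_Flim_eq_1)
  qed
qed

end
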